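(* There exists a function $f:\mathbb{N}\to\{-1,1\}$ with $f(1)=1$, $f(2)=1$, $f(3)=-1$, $f(5)=-1$, satisfying $f(2n)=f(2)f(n)$ and $f(3n)=f(3)f(n)$ for all $n\in\mathbb{N}$, such that for every integer $n\ge 0$ $$f(6n+1)+f(6n+2)+f(6n+3)=-\big(f(6n+4)+f(6n+5)+f(6n+6)\big)\in\{-1,1\}.$$ In particular $\sum_{n\le 6m} f(n)=0$ for every integer $m\ge 0$, and hence $\sum_{n\le x} f(n)=O(1)$.
   Context: Here $\mathbb{N}=\{1,2,3,\dots\}$. *)

theory Defs
  imports Main
begin

end

theory Submission
  imports Defs
begin

(* Its values at even n and at
   multiples of 3 are forced by f(2n) = f(n) and f(3n) = -f(n); the only free values are f(6m+1)
   and f(6m+5).  In the block 6m+1, ..., 6m+6 the forced values give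
     f(6m+2) + f(6m+3) = f(3m+1) - f(2m+1)   (the low defect s),
     f(6m+4) + f(6m+6) = f(3m+2) - f(m+1)    (the high defect t),
   and setting f(6m+5) = -(s + t) - f(6m+1) makes the second half of every block the negative of
   the first half (lemma block_halves).  It remains to choose f(6m+1) so that f(6m+1), f(6m+5) and
   the half-sum f(6m+1) + s are all signs; choosing f(6m+1) against the sign of s (or of t when
   s = 0) works unless s = t = 2 or s = t = -2 (lemma block_completion).  These extreme cases are
   excluded by the block of index m div 2, which is balanced by induction: for m even, s = t = 2
   would make the first half of that block sum to 3, for m odd the second half
   (lemma defects_not_extreme).  An induction over the blocks (lemma signs_and_balance) shows that
   all values are signs and all blocks are balanced; the partial sums then vanish at multiples
   of 6 and are bounded by 5, which gives the theorem. *)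

definition first_sign :: "int \<Rightarrow> int \<Rightarrow> int" where
  "first_sign s t = (if s > 0 then -1 else if s < 0 then 1 else if t > 0 then -1 else 1)"

lemma block_completion:
  assumes "s \<in> {-2, 0, 2}" "t \<in> {-2, 0, 2}"
    and "\<not> (s = 2 \<and> t = 2)" "\<not> (s = -2 \<and> t = -2)"
  shows "first_sign s t \<in> {-1, 1}" "first_sign s t + s \<in> {-1, 1}"
    and "- (s + t) - first_sign s t \<in> {-1, 1}"
  using assms by (auto simp: first_sign_def)

lemma sign_difference: "x \<in> {-1, 1} \<Longrightarrow> y \<in> {-1, 1} \<Longrightarrow> (x::int) - y \<in> {-2, 0, 2}"
  by auto

lemma recursion_decreases:
  fixes n :: nat
  assumes "odd n" "\<not> 3 dvd n" "n \<noteq> 1"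
  shows "3 * (n div 6) + 2 < n"
  using assms by presburger

function bsign :: "nat \<Rightarrow> int" where
  "bsign n =
    (if n = 0 then 0
     else if n = 1 then 1
     else if even n then bsign (n div 2)
     else if 3 dvd n then - bsign (n div 3)
     else let m = n div 6;
              s = bsign (3*m+1) - bsign (2*m+1);
              t = bsign (3*m+2) - bsign (m+1)
          in if n mod 6 = 1 then first_sign s t else - (s + t) - first_sign s t)"
  by auto
termination
  by (relation "measure id") (auto dest: recursion_decreases)

declare bsign.simps [simp del]

(* The defects of block m; by bsign_6m2 ... bsign_6m6 they are bsign(6m+2) + bsign(6m+3) and
   bsign(6m+4) + bsign(6m+6). *)
definition low_defect :: "nat \<Rightarrow> int" where
  "low_defect m = bsign (3*m+1) - bsign (2*m+1)"

definition high_defect :: "nat \<Rightarrow> int" where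
  "high_defect m = bsign (3*m+2) - bsign (m+1)"

lemma bsign_1: "bsign 1 = 1"
  by (simp add: bsign.simps)

lemma bsign_double: "n \<ge> 1 \<Longrightarrow> bsign (2*n) = bsign n"
  by (subst bsign.simps) simp

lemma bsign_2: "bsign 2 = 1"
  using bsign_double[of 1] bsign_1 by simp

lemma defects_0: "low_defect 0 = 0" "high_defect 0 = 0"
  using bsign_1 bsign_2 by (simp_all add: low_defect_def high_defect_def numeral_2_eq_2)

(* For odd n the triple 3n is odd and the recursion applies directly; even n reduce to n/2. *)
lemma bsign_triple: "n \<ge> 1 \<Longrightarrow> bsign (3*n) = - bsign n"
proof (induction n rule: less_induct)
  case (less n)
  show ?case
  proof (cases "even n")
    case True
    then obtain j where j: "n = 2*j" by blast
    with less.prems have "j \<ge> 1" "j < n" by auto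
    have "bsign (3*n) = bsign (2*(3*j))" using j by (simp add: mult.left_commute)
    also have "\<dots> = bsign (3*j)" using \<open>j \<ge> 1\<close> by (intro bsign_double) simp
    also have "\<dots> = - bsign j" using less.IH \<open>j < n\<close> \<open>j \<ge> 1\<close> by blast
    also have "bsign j = bsign n" using j bsign_double \<open>j \<ge> 1\<close> by simp
    finally show ?thesis .
  next
    case False
    then show ?thesis using less.prems by (subst bsign.simps) auto
  qed
qed

lemma bsign_6m1: "bsign (6*m+1) = first_sign (low_defect m) (high_defect m)"
proof (cases "m = 0")
  case True
  then show ?thesis using bsign_1 by (simp add: defects_0 first_sign_def)
next
  case False
  have "odd (6*m+1)" "\<not> 3 dvd (6*m+1)" "(6*m+1) div 6 = m" "(6*m+1) mod 6 = 1"
    by presburger+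
  with False show ?thesis
    unfolding low_defect_def high_defect_def by (subst bsign.simps) (simp add: Let_def)
qed

lemma bsign_6m5:
  "bsign (6*m+5) = - (low_defect m + high_defect m) - first_sign (low_defect m) (high_defect m)"
proof -
  have "odd (6*m+5)" "\<not> 3 dvd (6*m+5)" "(6*m+5) div 6 = m" "(6*m+5) mod 6 = 5"
    by presburger+
  then show ?thesis
    unfolding low_defect_def high_defect_def by (subst bsign.simps) (simp add: Let_def)
qed

lemma bsign_6m2: "bsign (6*m+2) = bsign (3*m+1)"
proof -
  have "6*m+2 = 2*(3*m+1)" by simp
  then show ?thesis by (simp only: bsign_double)
qed

lemma bsign_6m3: "bsign (6*m+3) = - bsign (2*m+1)"
proof -
  have "6*m+3 = 3*(2*m+1)" by simp
  then show ?thesis by (simp only: bsign_triple)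
qed

lemma bsign_6m4: "bsign (6*m+4) = bsign (3*m+2)"
proof -
  have "6*m+4 = 2*(3*m+2)" by simp
  then show ?thesis by (simp only: bsign_double)
qed

lemma bsign_6m6: "bsign (6*m+6) = - bsign (m+1)"
proof -
  have "6*m+6 = 3*(2*(m+1))" by simp
  then show ?thesis by (simp only: bsign_double bsign_triple)
qed

definition balanced :: "nat \<Rightarrow> bool" where
  "balanced k \<longleftrightarrow>
     bsign (6*k+1) + bsign (6*k+2) + bsign (6*k+3) = - (bsign (6*k+4) + bsign (6*k+5) + bsign (6*k+6)) \<and>
     bsign (6*k+1) + bsign (6*k+2) + bsign (6*k+3) \<in> {-1, 1}"

lemma block_halves:
  "bsign (6*m+1) + bsign (6*m+2) + bsign (6*m+3) = first_sign (low_defect m) (high_defect m) + low_defect m"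
  "bsign (6*m+4) + bsign (6*m+5) + bsign (6*m+6) = - (first_sign (low_defect m) (high_defect m) + low_defect m)"
  unfolding bsign_6m1 bsign_6m2 bsign_6m3 bsign_6m4 bsign_6m5 bsign_6m6
  by (simp_all add: low_defect_def high_defect_def)

lemma balanced_iff: "balanced m \<longleftrightarrow> first_sign (low_defect m) (high_defect m) + low_defect m \<in> {-1, 1}"
  unfolding balanced_def block_halves by simp

definition signs_upto :: "nat \<Rightarrow> bool" where
  "signs_upto N \<longleftrightarrow> (\<forall>n. 1 \<le> n \<and> n \<le> N \<longrightarrow> bsign n \<in> {-1, 1})"

lemma half_block_not_extreme:
  fixes x y z :: int
  assumes "x \<in> {-1, 1}" "y \<in> {-1, 1}" "x + z \<in> {-1, 1}"
  shows "\<not> (x - y = 2 \<and> z = 2) \<and> \<not> (x - y = -2 \<and> z = -2)"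
  using assms by auto

(* The defects of block m are read off from block m div 2: for m = 2k they are
   bsign(6k+1) - bsign(4k+1) and bsign(6k+2) + bsign(6k+3), for m = 2k+1 they are
   bsign(6k+4) - bsign(4k+3) and bsign(6k+5) + bsign(6k+6).  Both equal to 2 (or both to -2)
   would make a half of the balanced block k sum to 3 (or -3). *)
lemma defects_not_extreme:
  assumes signs: "signs_upto (6*m)" and bal: "\<forall>k<m. balanced k" and "m \<noteq> 0"
  shows "\<not> (low_defect m = 2 \<and> high_defect m = 2) \<and> \<not> (low_defect m = -2 \<and> high_defect m = -2)"
proof (cases "even m")
  case True
  then obtain k where k: "m = 2*k" by blast
  with \<open>m \<noteq> 0\<close> have "k \<ge> 1" "balanced k" using bal by simp_all
  then have half: "bsign (6*k+1) + (bsign (6*k+2) + bsign (6*k+3)) \<in> {-1,1}"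
    unfolding balanced_def add.assoc by blast
  have signs_k: "bsign (6*k+1) \<in> {-1,1}" "bsign (4*k+1) \<in> {-1,1}"
    using signs k \<open>k \<ge> 1\<close> unfolding signs_upto_def by simp_all
  have "low_defect m = bsign (6*k+1) - bsign (4*k+1)"
    "high_defect m = bsign (6*k+2) + bsign (6*k+3)"
  proof -
    have idx: "3*m+1 = 6*k+1" "2*m+1 = 4*k+1" "3*m+2 = 6*k+2" "m+1 = 2*k+1" using k by simp_all
    show "low_defect m = bsign (6*k+1) - bsign (4*k+1)"
      "high_defect m = bsign (6*k+2) + bsign (6*k+3)"
      unfolding low_defect_def high_defect_def idx bsign_6m3 by simp_all
  qed
  with half_block_not_extreme[OF signs_k half] show ?thesis by simp
next
  case False
  then obtain k where k: "m = 2*k+1" using oddE by blast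
  then have "balanced k" using bal by simp
  then have "bsign (6*k+4) + bsign (6*k+5) + bsign (6*k+6) \<in> {-1,1}"
    unfolding balanced_iff block_halves(2) by auto
  then have half: "bsign (6*k+4) + (bsign (6*k+5) + bsign (6*k+6)) \<in> {-1,1}"
    unfolding add.assoc .
  have signs_k: "bsign (6*k+4) \<in> {-1,1}" "bsign (4*k+3) \<in> {-1,1}"
    using signs k unfolding signs_upto_def by auto
  have "low_defect m = bsign (6*k+4) - bsign (4*k+3)"
    "high_defect m = bsign (6*k+5) + bsign (6*k+6)"
  proof -
    have idx: "3*m+1 = 6*k+4" "2*m+1 = 4*k+3" "3*m+2 = 6*k+5" "m+1 = 2*(k+1)" using k by simp_all
    have "bsign (2*(k+1)) = bsign (k+1)" by (rule bsign_double) simp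
    then show "low_defect m = bsign (6*k+4) - bsign (4*k+3)"
      "high_defect m = bsign (6*k+5) + bsign (6*k+6)"
      unfolding low_defect_def high_defect_def idx bsign_6m6 by simp_all
  qed
  with half_block_not_extreme[OF signs_k half] show ?thesis by simp
qed

lemma block_step:
  assumes signs: "signs_upto (6*m)" and bal: "\<forall>k<m. balanced k"
  shows "signs_upto (6*m+6) \<and> balanced m"
proof -
  have earlier_sign: "bsign j \<in> {-1,1}" if "j \<in> {3*m+1, 2*m+1, 3*m+2, m+1}" for j
  proof (cases "m = 0")
    case True
    with that have "j = 1 \<or> j = 2" by auto
    then show ?thesis using bsign_1 bsign_2 by auto
  next
    case False
    with that have "1 \<le> j \<and> j \<le> 6*m" by auto
    then show ?thesis using signs unfolding signs_upto_def by blast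
  qed
  then have earlier: "bsign (3*m+1) \<in> {-1,1}" "bsign (2*m+1) \<in> {-1,1}"
    "bsign (3*m+2) \<in> {-1,1}" "bsign (m+1) \<in> {-1,1}"
    by simp_all
  have not_extreme: "\<not> (low_defect m = 2 \<and> high_defect m = 2)"
    "\<not> (low_defect m = -2 \<and> high_defect m = -2)"
    using defects_not_extreme[OF signs bal] defects_0 by (cases "m = 0"; simp)+
  have defects: "low_defect m \<in> {-2,0,2}" "high_defect m \<in> {-2,0,2}"
    using earlier sign_difference unfolding low_defect_def high_defect_def by blast+
  note completion = block_completion[OF defects not_extreme]
  have new: "bsign (6*m+1) \<in> {-1,1}" "bsign (6*m+2) \<in> {-1,1}" "bsign (6*m+3) \<in> {-1,1}"
    "bsign (6*m+4) \<in> {-1,1}" "bsign (6*m+5) \<in> {-1,1}" "bsign (6*m+6) \<in> {-1,1}"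
    using earlier completion
    unfolding bsign_6m1 bsign_6m2 bsign_6m3 bsign_6m4 bsign_6m5 bsign_6m6 by auto
  have "signs_upto (6*m+6)"
    unfolding signs_upto_def
  proof (intro allI impI)
    fix n assume n: "1 \<le> n \<and> n \<le> 6*m+6"
    show "bsign n \<in> {-1,1}"
    proof (cases "n \<le> 6*m")
      case True
      then show ?thesis using signs n unfolding signs_upto_def by blast
    next
      case False
      then have "n = 6*m+1 \<or> n = 6*m+2 \<or> n = 6*m+3 \<or> n = 6*m+4 \<or> n = 6*m+5 \<or> n = 6*m+6"
        using n by linarith
      then show ?thesis using new by blast
    qed
  qed
  moreover have "balanced m"
    using completion(2) by (simp add: balanced_iff)
  ultimately show ?thesis by simp
qed

lemma signs_and_balance: "signs_upto (6*m) \<and> (\<forall>k<m. balanced k)"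
proof (induction m)
  case 0
  then show ?case by (simp add: signs_upto_def)
next
  case (Suc m)
  then have "signs_upto (6*m+6) \<and> balanced m" using block_step by blast
  moreover have "6 * Suc m = 6*m+6" by simp
  ultimately show ?case using Suc by (simp only:) (auto simp: less_Suc_eq)
qed

lemma bsign_sign: "n \<ge> 1 \<Longrightarrow> bsign n \<in> {-1, 1}"
  using signs_and_balance[of n] unfolding signs_upto_def by auto

lemma bsign_balanced: "balanced k"
  using signs_and_balance[of "Suc k"] by simp

lemma partial_sum_6m: "(\<Sum>k=1..6*m. bsign k) = 0"
proof (induction m)
  case 0
  then show ?case by simp
next
  case (Suc m)
  have "(\<Sum>k=1..6*m+6. bsign k) = (\<Sum>k=1..6*m. bsign k) + (\<Sum>k=6*m+1..6*m+6. bsign k)"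
    by (rule sum.ub_add_nat) simp
  also have "(\<Sum>k=6*m+1..6*m+6. bsign k) =
      bsign (6*m+1) + bsign (6*m+2) + bsign (6*m+3) + bsign (6*m+4) + bsign (6*m+5) + bsign (6*m+6)"
    by (simp add: numeral_eq_Suc add.assoc)
  also have "\<dots> = 0" using block_halves[of m] by simp
  finally have "(\<Sum>k=1..6*m+6. bsign k) = 0" using Suc by simp
  moreover have "6 * Suc m = 6*m+6" by simp
  ultimately show ?case by (simp only:)
qed

(* A partial sum is a sum of at most 5 signs beyond the last multiple of 6. *)
lemma partial_sum_bounded: "\<bar>\<Sum>k=1..N. bsign k\<bar> \<le> 5"
proof -
  define m r where "m = N div 6" and "r = N mod 6"
  have N: "N = 6*m + r" and "r \<le> 5" unfolding m_def r_def by auto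
  have "(\<Sum>k=1..N. bsign k) = (\<Sum>k=1..6*m. bsign k) + (\<Sum>k=6*m+1..6*m+r. bsign k)"
    unfolding N by (rule sum.ub_add_nat) simp
  then have "\<bar>\<Sum>k=1..N. bsign k\<bar> = \<bar>\<Sum>k=6*m+1..6*m+r. bsign k\<bar>"
    using partial_sum_6m by simp
  also have "\<dots> \<le> (\<Sum>k=6*m+1..6*m+r. \<bar>bsign k\<bar>)" by (rule sum_abs)
  also have "\<dots> \<le> of_nat (card {6*m+1..6*m+r}) * 1"
  proof (rule sum_bounded_above)
    fix k assume "k \<in> {6*m+1..6*m+r}"
    then have "bsign k \<in> {-1, 1}" using bsign_sign by simp
    then show "\<bar>bsign k\<bar> \<le> 1" by auto
  qed
  also have "\<dots> \<le> 5" using \<open>r \<le> 5\<close> by simp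
  finally show ?thesis .
qed

theorem mainTheorem2:
  shows "\<exists>f :: nat \<Rightarrow> int.
     (\<forall>n\<ge>1. f n \<in> {-1, 1}) \<and>
     f 1 = 1 \<and> f 2 = 1 \<and> f 3 = -1 \<and> f 5 = -1 \<and>
     (\<forall>n\<ge>1. f (2 * n) = f 2 * f n) \<and>
     (\<forall>n\<ge>1. f (3 * n) = f 3 * f n) \<and>
     (\<forall>n::nat. f (6*n+1) + f (6*n+2) + f (6*n+3) = - (f (6*n+4) + f (6*n+5) + f (6*n+6)) \<and>
                f (6*n+1) + f (6*n+2) + f (6*n+3) \<in> {-1, 1}) \<and>
     (\<forall>m::nat. (\<Sum>k=1..6*m. f k) = 0) \<and>
     (\<exists>C::int. \<forall>N::nat. \<bar>\<Sum>k=1..N. f k\<bar> \<le> C)"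
proof (intro exI[of _ bsign] conjI allI impI)
  have bsign_3: "bsign 3 = -1" using bsign_triple[of 1] bsign_1 by simp
  have bsign_5: "bsign 5 = -1"
    using bsign_6m5[of 0] by (simp add: defects_0 first_sign_def)
  show "bsign 1 = 1" "bsign 2 = 1" "bsign 3 = -1" "bsign 5 = -1"
    using bsign_1 bsign_2 bsign_3 bsign_5 by auto
  fix n :: nat
  show "1 \<le> n \<Longrightarrow> bsign n \<in> {-1,1}" by (rule bsign_sign)
  show "1 \<le> n \<Longrightarrow> bsign (2*n) = bsign 2 * bsign n" using bsign_double bsign_2 by simp
  show "1 \<le> n \<Longrightarrow> bsign (3*n) = bsign 3 * bsign n" using bsign_triple bsign_3 by simp
  show "bsign (6*n+1) + bsign (6*n+2) + bsign (6*n+3) = - (bsign (6*n+4) + bsign (6*n+5) + bsign (6*n+6))"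
    "bsign (6*n+1) + bsign (6*n+2) + bsign (6*n+3) \<in> {-1,1}"
    using bsign_balanced[of n] unfolding balanced_def by auto
next
  fix m :: nat
  show "(\<Sum>k=1..6*m. bsign k) = 0" by (rule partial_sum_6m)
next
  show "\<exists>C::int. \<forall>N::nat. \<bar>\<Sum>k=1..N. bsign k\<bar> \<le> C" using partial_sum_bounded by blast
qed

end
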